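(* Let $\mu,\nu$ be partitions with $|\mu|+|\nu|=k$ that form the cycle-path type of some partial permutation. There is a polynomial $P_{(\mu,\nu)}\in\mathbb{Z}[n,m_1,\dots,m_k]$ of degree $k$ with respect to the grading $\deg n=1$, $\deg m_i=i$, such that for every $n$ and every $\lambda\vdash n$, $c_{(\mu,\nu)}(\lambda)=P_{(\mu,\nu)}(n,m_1(\lambda),\dots,m_k(\lambda))$.
   Context: A partial permutation $(I,J)$, $I=(i_1,\dots,i_k)$, $J=(j_1,\dots,j_k)$, is packed if its set of entries $I\cup J$ equals $[m]$ for some $m$. Its graph $G(I,J)$ has vertices $I\cup J$ and edges $i_\ell\to j_\ell$; the cycle-path type $(\mu,\nu)$ consists of the partition of cycle lengths and the partition of path lengths (length = number of edges). For $\lambda\vdash n$, fix $\pi\in\mathfrak{S}_n$ of cycle type $\lambda$; a function $\psi:[m]\to[n]$ (not necessarily injective) is compatible with $(I,J)$ relative to $\pi$ if $\pi(\psi(i_\ell))=\psi(j_\ell)$ for all $\ell\in[k]$. For a packed $(I,J)$ of cycle-path type $(\mu,\nu)$, $c_{(\mu,\nu)}(\lambda)$ denotes the number of such compatible functions; it depends only on $(\mu,\nu)$ and $\lambda$. $m_i(\lambda)$ is the number of parts of $\lambda$ equal to $i$. *)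

theory Defs
  imports "HOL-Library.Multiset" "HOL-Library.FuncSet" "HOL-Combinatorics.Permutations"
begin

definition is_partition_of :: "nat multiset \<Rightarrow> nat \<Rightarrow> bool" where
  "is_partition_of lam n \<longleftrightarrow> (\<forall>x\<in>#lam. 0 < x) \<and> sum_mset lam = n"

definition is_partition :: "nat multiset \<Rightarrow> bool" where
  "is_partition lam \<longleftrightarrow> (\<forall>x\<in>#lam. 0 < x)"

definition perm_orbit :: "(nat \<Rightarrow> nat) \<Rightarrow> nat \<Rightarrow> nat set" where
  "perm_orbit p x = {(p ^^ j) x | j. True}"

definition cycle_type :: "(nat \<Rightarrow> nat) \<Rightarrow> nat set \<Rightarrow> nat multiset" where
  "cycle_type p A = image_mset card (mset_set (perm_orbit p ` A))"

definition partial_perm :: "nat list \<Rightarrow> nat list \<Rightarrow> bool" where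
  "partial_perm I J \<longleftrightarrow> length I = length J \<and> distinct I \<and> distinct J
     \<and> (\<forall>x \<in> set I \<union> set J. 0 < x)"

definition packed :: "nat list \<Rightarrow> nat list \<Rightarrow> nat \<Rightarrow> bool" where
  "packed I J m \<longleftrightarrow> partial_perm I J \<and> set I \<union> set J = {1..m}"

definition pp_edges :: "nat list \<Rightarrow> nat list \<Rightarrow> (nat \<times> nat) set" where
  "pp_edges I J = set (zip I J)"

definition pp_components :: "nat list \<Rightarrow> nat list \<Rightarrow> nat set set" where
  "pp_components I J =
     (\<lambda>v. ((pp_edges I J \<union> (pp_edges I J)\<inverse>)\<^sup>*) `` {v}) ` (set I \<union> set J)"

definition comp_edges :: "nat list \<Rightarrow> nat list \<Rightarrow> nat set \<Rightarrow> nat" where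
  "comp_edges I J C = card {l. l < length I \<and> I ! l \<in> C}"

text \<open>A component is a cycle iff every vertex has an outgoing edge; otherwise it is a path.\<close>
definition is_cycle_comp :: "nat list \<Rightarrow> nat list \<Rightarrow> nat set \<Rightarrow> bool" where
  "is_cycle_comp I J C \<longleftrightarrow> C \<subseteq> set I"

definition cycle_part :: "nat list \<Rightarrow> nat list \<Rightarrow> nat multiset" where
  "cycle_part I J = image_mset (comp_edges I J)
      (mset_set {C \<in> pp_components I J. is_cycle_comp I J C})"

definition path_part :: "nat list \<Rightarrow> nat list \<Rightarrow> nat multiset" where
  "path_part I J = image_mset (comp_edges I J)
      (mset_set {C \<in> pp_components I J. \<not> is_cycle_comp I J C})"

definition num_compatible :: "nat list \<Rightarrow> nat list \<Rightarrow> nat \<Rightarrow> (nat \<Rightarrow> nat) \<Rightarrow> nat \<Rightarrow> nat" where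
  "num_compatible I J m p n = card {\<psi> \<in> {1..m} \<rightarrow>\<^sub>E {1..n}.
      \<forall>l < length I. p (\<psi> (I ! l)) = \<psi> (J ! l)}"

text \<open>Polynomials in Z[n, m_1, ..., m_k], given by coefficient functions on exponent vectors
  e (e 0 = exponent of n, e i = exponent of m_i for 1 \<le> i \<le> k, e i = 0 for i > k).\<close>
definition wdeg :: "nat \<Rightarrow> (nat \<Rightarrow> nat) \<Rightarrow> nat" where
  "wdeg k e = e 0 + (\<Sum>i=1..k. i * e i)"

definition is_poly_nm :: "nat \<Rightarrow> ((nat \<Rightarrow> nat) \<Rightarrow> int) \<Rightarrow> bool" where
  "is_poly_nm k P \<longleftrightarrow> finite {e. P e \<noteq> 0} \<and> (\<forall>e. P e \<noteq> 0 \<longrightarrow> (\<forall>i>k. e i = 0))"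

definition eval_poly_nm :: "nat \<Rightarrow> ((nat \<Rightarrow> nat) \<Rightarrow> int) \<Rightarrow> nat \<Rightarrow> (nat \<Rightarrow> nat) \<Rightarrow> int" where
  "eval_poly_nm k P n ms = (\<Sum>e \<in> {e. P e \<noteq> 0}.
      P e * int n ^ e 0 * (\<Prod>i=1..k. int (ms i) ^ e i))"

end

(*
  Completing every path of the graph G(I,J) into a cycle, by an extra edge from its terminal
  vertex back to its initial one, gives a permutation whose orbits are exactly the connected
  components of G(I,J).  A compatible function is determined independently on each component
  by its value at one vertex: on a path this value is arbitrary (n choices), on a cycle of
  length L it has to be a fixed point of pi^L, and pi^L has sum_{d | L} d * m_d(lambda) fixed
  points.  Hence
    c_(mu,nu)(lambda) = n^(l(nu)) * prod_{L in mu} sum_{d | L} d * m_d(lambda),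
  where l(nu) is the number of parts of nu; this is a polynomial of weighted degree
  l(nu) + |mu| <= |nu| + |mu| = k.
*)
theory Submission
  imports Defs "HOL-Combinatorics.Orbits" "HOL-Combinatorics.Cycles"
begin

section \<open>Polynomials in n and m_1, ..., m_k\<close>

definition monomial_nm :: "nat \<Rightarrow> (nat \<Rightarrow> nat) \<Rightarrow> nat \<Rightarrow> (nat \<Rightarrow> nat) \<Rightarrow> int" where
  "monomial_nm k e n ms = int n ^ e 0 * (\<Prod>i=1..k. int (ms i) ^ e i)"

definition poly_nm_fun :: "nat \<Rightarrow> nat \<Rightarrow> (nat \<Rightarrow> (nat \<Rightarrow> nat) \<Rightarrow> int) \<Rightarrow> bool" where
  "poly_nm_fun k D F \<longleftrightarrow> (\<exists>P. is_poly_nm k P \<and> (\<forall>e. P e \<noteq> 0 \<longrightarrow> wdeg k e \<le> D) \<and>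
      (\<forall>n ms. F n ms = eval_poly_nm k P n ms))"

lemma eval_poly_nm_eq_sum_monomials:
  "eval_poly_nm k P n ms = (\<Sum>e | P e \<noteq> 0. P e * monomial_nm k e n ms)"
  unfolding eval_poly_nm_def monomial_nm_def by (simp add: mult.assoc)

lemma monomial_nm_add: "monomial_nm k (\<lambda>i. a i + b i) n ms = monomial_nm k a n ms * monomial_nm k b n ms"
  unfolding monomial_nm_def by (simp add: power_add prod.distrib)

lemma wdeg_add: "wdeg k (\<lambda>i. a i + b i) = wdeg k a + wdeg k b"
  unfolding wdeg_def by (simp add: algebra_simps sum.distrib)

lemma poly_nm_fun_combination:
  assumes S: "finite S" and vanish: "\<And>s i. s \<in> S \<Longrightarrow> k < i \<Longrightarrow> ex s i = 0"
    and deg: "\<And>s. s \<in> S \<Longrightarrow> wdeg k (ex s) \<le> D"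
    and F: "\<And>n ms. F n ms = (\<Sum>s\<in>S. c s * monomial_nm k (ex s) n ms)"
  shows "poly_nm_fun k D F"
proof -
  define P where "P e = (\<Sum>s | s \<in> S \<and> ex s = e. c s)" for e
  have supp: "{e. P e \<noteq> 0} \<subseteq> ex ` S"
  proof
    fix e
    assume "e \<in> {e. P e \<noteq> 0}"
    then have "{s \<in> S. ex s = e} \<noteq> {}"
      unfolding P_def by (intro notI) simp
    then show "e \<in> ex ` S" by blast
  qed
  have "finite {e. P e \<noteq> 0}"
    using S by (rule finite_subset[OF supp, OF finite_imageI])
  moreover have "e i = 0" if "P e \<noteq> 0" "k < i" for e i
    using that supp vanish by force
  ultimately have "is_poly_nm k P"
    unfolding is_poly_nm_def by blast
  moreover have "\<forall>e. P e \<noteq> 0 \<longrightarrow> wdeg k e \<le> D"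
    using supp deg by force
  moreover have "F n ms = eval_poly_nm k P n ms" for n ms
  proof -
    have "eval_poly_nm k P n ms = (\<Sum>e\<in>ex ` S. P e * monomial_nm k e n ms)"
      unfolding eval_poly_nm_eq_sum_monomials
      by (rule sum.mono_neutral_left) (use S supp in auto)
    also have "\<dots> = (\<Sum>e\<in>ex ` S. \<Sum>s | s \<in> S \<and> ex s = e. c s * monomial_nm k (ex s) n ms)"
      unfolding P_def sum_distrib_right by (intro sum.cong refl) auto
    also have "\<dots> = (\<Sum>s\<in>S. c s * monomial_nm k (ex s) n ms)"
      by (rule sum.image_gen[symmetric]) (rule S)
    finally show ?thesis using F by simp
  qed
  ultimately show ?thesis unfolding poly_nm_fun_def by blast
qed

lemma poly_nm_funE:
  assumes "poly_nm_fun k D F"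
  obtains P where "finite {e. P e \<noteq> 0}" "\<And>e i. P e \<noteq> 0 \<Longrightarrow> k < i \<Longrightarrow> e i = 0"
    "\<And>e. P e \<noteq> 0 \<Longrightarrow> wdeg k e \<le> D"
    "\<And>n ms. F n ms = (\<Sum>e | P e \<noteq> 0. P e * monomial_nm k e n ms)"
  using assms unfolding poly_nm_fun_def is_poly_nm_def eval_poly_nm_eq_sum_monomials by blast

lemma poly_nm_fun_add:
  assumes "poly_nm_fun k D F" "poly_nm_fun k D G"
  shows "poly_nm_fun k D (\<lambda>n ms. F n ms + G n ms)"
proof -
  obtain P where P: "finite {e. P e \<noteq> 0}" "\<And>e i. P e \<noteq> 0 \<Longrightarrow> k < i \<Longrightarrow> e i = 0"
    "\<And>e. P e \<noteq> 0 \<Longrightarrow> wdeg k e \<le> D"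
    "\<And>n ms. F n ms = (\<Sum>e | P e \<noteq> 0. P e * monomial_nm k e n ms)"
    using poly_nm_funE[OF assms(1)] by blast
  obtain Q where Q: "finite {e. Q e \<noteq> 0}" "\<And>e i. Q e \<noteq> 0 \<Longrightarrow> k < i \<Longrightarrow> e i = 0"
    "\<And>e. Q e \<noteq> 0 \<Longrightarrow> wdeg k e \<le> D"
    "\<And>n ms. G n ms = (\<Sum>e | Q e \<noteq> 0. Q e * monomial_nm k e n ms)"
    using poly_nm_funE[OF assms(2)] by blast
  show ?thesis
  proof (rule poly_nm_fun_combination[where S="{e. P e \<noteq> 0} <+> {e. Q e \<noteq> 0}"
        and c="case_sum P Q" and ex="case_sum id id"])
    fix n ms
    show "F n ms + G n ms = (\<Sum>s \<in> {e. P e \<noteq> 0} <+> {e. Q e \<noteq> 0}.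
        case_sum P Q s * monomial_nm k (case_sum id id s) n ms)"
      unfolding P(4) Q(4) using P(1) Q(1) by (simp add: sum.Plus)
  qed (use P Q in auto)
qed

lemma poly_nm_fun_mult:
  assumes "poly_nm_fun k D1 F" "poly_nm_fun k D2 G"
  shows "poly_nm_fun k (D1 + D2) (\<lambda>n ms. F n ms * G n ms)"
proof -
  obtain P where P: "finite {e. P e \<noteq> 0}" "\<And>e i. P e \<noteq> 0 \<Longrightarrow> k < i \<Longrightarrow> e i = 0"
    "\<And>e. P e \<noteq> 0 \<Longrightarrow> wdeg k e \<le> D1"
    "\<And>n ms. F n ms = (\<Sum>e | P e \<noteq> 0. P e * monomial_nm k e n ms)"
    using poly_nm_funE[OF assms(1)] by blast
  obtain Q where Q: "finite {e. Q e \<noteq> 0}" "\<And>e i. Q e \<noteq> 0 \<Longrightarrow> k < i \<Longrightarrow> e i = 0"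
    "\<And>e. Q e \<noteq> 0 \<Longrightarrow> wdeg k e \<le> D2"
    "\<And>n ms. G n ms = (\<Sum>e | Q e \<noteq> 0. Q e * monomial_nm k e n ms)"
    using poly_nm_funE[OF assms(2)] by blast
  show ?thesis
  proof (rule poly_nm_fun_combination[where S="{e. P e \<noteq> 0} \<times> {e. Q e \<noteq> 0}"
        and c="\<lambda>(a, b). P a * Q b" and ex="\<lambda>(a, b) i. a i + b i"])
    fix n ms
    show "F n ms * G n ms = (\<Sum>s \<in> {e. P e \<noteq> 0} \<times> {e. Q e \<noteq> 0}.
        (case s of (a, b) \<Rightarrow> P a * Q b) * monomial_nm k (case s of (a, b) \<Rightarrow> \<lambda>i. a i + b i) n ms)"
      unfolding P(4) Q(4) sum_product sum.cartesian_product
      by (intro sum.cong refl) (auto simp: monomial_nm_add)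
  qed (use P Q in \<open>auto simp: wdeg_add add_mono\<close>)
qed

lemma poly_nm_fun_mono: "poly_nm_fun k D F \<Longrightarrow> D \<le> D' \<Longrightarrow> poly_nm_fun k D' F"
  unfolding poly_nm_fun_def by (meson le_trans)

lemma poly_nm_fun_const: "poly_nm_fun k 0 (\<lambda>n ms. c)"
  by (rule poly_nm_fun_combination[where S="{()}" and c="\<lambda>_. c" and ex="\<lambda>_ _. 0"])
     (auto simp: wdeg_def monomial_nm_def)

lemma poly_nm_fun_var_n: "poly_nm_fun k 1 (\<lambda>n ms. int n)"
  by (rule poly_nm_fun_combination[where S="{()}" and c="\<lambda>_. 1" and ex="\<lambda>_ i. if i = 0 then 1 else 0"])
     (auto simp: wdeg_def monomial_nm_def)

lemma poly_nm_fun_var_m: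
  assumes "1 \<le> d" "d \<le> k"
  shows "poly_nm_fun k d (\<lambda>n ms. int (ms d))"
proof (rule poly_nm_fun_combination[where S="{()}" and c="\<lambda>_. 1" and ex="\<lambda>_ i. if i = d then 1 else 0"])
  have "(\<Sum>i = 1..k. i * (if i = d then 1 else 0)) = (\<Sum>i\<in>{d}. i)"
    by (rule sum.mono_neutral_cong_right) (use assms in auto)
  then show "\<And>s. wdeg k (\<lambda>i. if i = d then 1 else 0) \<le> d"
    using assms by (simp add: wdeg_def)
  have "(\<Prod>i = 1..k. int (ms i) ^ (if i = d then 1 else 0)) = (\<Prod>i\<in>{d}. int (ms i))" for ms
    by (rule prod.mono_neutral_cong_right) (use assms in auto)
  then show "\<And>n ms. int (ms d) = (\<Sum>s\<in>{()}. 1 * monomial_nm k (\<lambda>i. if i = d then 1 else 0) n ms)"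
    using assms by (simp add: monomial_nm_def)
qed (use assms in auto)

lemma poly_nm_fun_sum:
  assumes "finite A" "\<And>a. a \<in> A \<Longrightarrow> poly_nm_fun k D (F a)"
  shows "poly_nm_fun k D (\<lambda>n ms. \<Sum>a\<in>A. F a n ms)"
  using assms
proof (induction A rule: finite_induct)
  case empty
  then show ?case using poly_nm_fun_mono[OF poly_nm_fun_const] by simp
next
  case (insert x A)
  then show ?case using poly_nm_fun_add[of k D "F x"] by simp
qed

lemma poly_nm_fun_power_n: "poly_nm_fun k a (\<lambda>n ms. int n ^ a)"
proof (induction a)
  case 0
  then show ?case using poly_nm_fun_const[of k 1] by simp
next
  case (Suc a)
  then show ?case using poly_nm_fun_mult[OF poly_nm_fun_var_n Suc] by simp
qed

lemma poly_nm_fun_prod_mset: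
  assumes "\<And>L. L \<in># M \<Longrightarrow> poly_nm_fun k L (G L)"
  shows "poly_nm_fun k (sum_mset M) (\<lambda>n ms. \<Prod>L\<in>#M. G L n ms)"
  using assms
proof (induction M)
  case empty
  then show ?case using poly_nm_fun_const[of k 1] by simp
next
  case (add x M)
  then show ?case using poly_nm_fun_mult[of k x "G x"] by simp
qed

section \<open>Orbits and fixed points of permutations\<close>

lemma perm_orbit_eq_orbit: "permutation p \<Longrightarrow> perm_orbit p x = orbit p x"
  unfolding perm_orbit_def by (simp add: orbit_altdef_permutation)

lemma orbit_eq_funpow_image:
  assumes "permutation g"
  shows "orbit g x = (\<lambda>j. (g ^^ j) x) ` {..<least_power g x}"
  using support_set[OF assms, of x]
  by (simp add: orbit_altdef_permutation[OF assms] full_SetCompr_eq atLeast0LessThan)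

lemma inj_on_funpow_least_power:
  assumes "permutation g"
  shows "inj_on (\<lambda>j. (g ^^ j) x) {..<least_power g x}"
  using cycle_of_permutation[OF assms, of x] by (simp add: distinct_map atLeast0LessThan)

lemma card_orbit_eq_least_power:
  assumes "permutation g"
  shows "card (orbit g x) = least_power g x"
  using card_image[OF inj_on_funpow_least_power[OF assms]]
  by (simp add: orbit_eq_funpow_image[OF assms])

lemma permutation_orbit_eq: "permutation g \<Longrightarrow> y \<in> orbit g x \<Longrightarrow> orbit g y = orbit g x"
  using orbit_cyclic_eq3[OF cyclic_on_orbit'] .

lemma funpow_dist_funpow:
  assumes g: "permutation g" and j: "j < least_power g x"
  shows "funpow_dist g x ((g ^^ j) x) = j"
proof -
  have "(g ^^ j) x \<in> orbit g x"
    by (auto simp: orbit_altdef_permutation[OF g])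
  then have "(g ^^ funpow_dist g x ((g ^^ j) x)) x = (g ^^ j) x"
    by (rule funpow_dist_prop)
  moreover have "funpow_dist g x ((g ^^ j) x) \<le> j"
    unfolding funpow_dist_def by (rule Least_le) simp
  ultimately show ?thesis
    using inj_on_funpow_least_power[OF g, of x] j by (auto dest: inj_onD)
qed

lemma funpow_dist_less_least_power:
  assumes "permutation g" "v \<in> orbit g x"
  shows "funpow_dist g x v < least_power g x"
  using assms funpow_dist_funpow[OF assms(1)] by (auto simp: orbit_eq_funpow_image)

lemma funpow_fixed_iff_card_orbit_dvd:
  assumes "permutation p"
  shows "(p ^^ L) x = x \<longleftrightarrow> card (orbit p x) dvd L"
  using assms by (simp add: card_orbit_eq_least_power least_power_dvd)

lemma count_image_mset_mset_set:
  "finite A \<Longrightarrow> count (image_mset f (mset_set A)) y = card {x\<in>A. f x = y}"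
  by (simp add: count_image_mset' conj_commute eq_commute)

lemma card_fixpoints_funpow:
  assumes p: "p permutes S" and S: "finite S" and L: "0 < L"
  shows "card {x\<in>S. (p ^^ L) x = x} = (\<Sum>d | d dvd L. d * count (cycle_type p S) d)"
proof -
  have perm: "permutation p" using p S permutation_permutes by blast
  define A where "A = {Ob \<in> orbit p ` S. card Ob dvd L}"
  have fin_A: "finite A" unfolding A_def using S by simp
  have "{x\<in>S. (p ^^ L) x = x} = \<Union>A"
    using permutation_self_in_orbit[OF perm] permutes_orbit_subset[OF p] permutation_orbit_eq[OF perm]
    by (auto simp: A_def funpow_fixed_iff_card_orbit_dvd[OF perm])
  moreover have "pairwise disjnt A"
    using permutation_orbit_eq[OF perm] unfolding A_def pairwise_def disjnt_def by blast
  moreover have "\<And>Ob. Ob \<in> A \<Longrightarrow> finite Ob"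
    unfolding A_def using permutes_orbit_subset[OF p] S finite_subset by blast
  ultimately have "card {x\<in>S. (p ^^ L) x = x} = (\<Sum>Ob\<in>A. card Ob)"
    by (simp add: card_Union_disjoint)
  also have "\<dots> = (\<Sum>d | d dvd L. \<Sum>Ob | Ob \<in> A \<and> card Ob = d. card Ob)"
    using L fin_A by (intro sum.group[symmetric]) (auto simp: A_def)
  also have "\<dots> = (\<Sum>d | d dvd L. d * card {Ob \<in> orbit p ` S. card Ob = d})"
    by (intro sum.cong refl) (auto simp: A_def intro!: arg_cong[where f=card])
  also have "\<dots> = (\<Sum>d | d dvd L. d * count (cycle_type p S) d)"
    using S by (simp add: cycle_type_def perm_orbit_eq_orbit[OF perm] count_image_mset_mset_set)
  finally show ?thesis .
qed

section \<open>Counting functions along the orbits of a permutation\<close>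

definition glue_blocks :: "'a set set \<Rightarrow> ('a set \<Rightarrow> 'a \<Rightarrow> 'b) \<Rightarrow> 'a \<Rightarrow> 'b" where
  "glue_blocks \<C> \<Phi> = (\<lambda>v\<in>\<Union>\<C>. \<Phi> (THE C. C \<in> \<C> \<and> v \<in> C) v)"

lemma glue_blocks_apply:
  assumes "pairwise disjnt \<C>" "C \<in> \<C>" "v \<in> C"
  shows "glue_blocks \<C> \<Phi> v = \<Phi> C v"
proof -
  have "(THE C. C \<in> \<C> \<and> v \<in> C) = C"
    by (rule the_equality) (use assms in \<open>auto simp: pairwise_def disjnt_def\<close>)
  then show ?thesis
    using assms(2,3) by (auto simp: glue_blocks_def)
qed

lemma restrict_glue_blocks:
  assumes "pairwise disjnt \<C>" "C \<in> \<C>" "\<Phi> C \<in> extensional C"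
  shows "restrict (glue_blocks \<C> \<Phi>) C = \<Phi> C"
proof
  fix v
  show "restrict (glue_blocks \<C> \<Phi>) C v = \<Phi> C v"
  proof (cases "v \<in> C")
    case True
    then show ?thesis using glue_blocks_apply[OF assms(1,2) True] by simp
  next
    case False
    then show ?thesis using extensional_arb[OF assms(3) False] by simp
  qed
qed

lemma glue_blocks_restrict:
  assumes "pairwise disjnt \<C>" "\<psi> \<in> extensional (\<Union>\<C>)"
  shows "glue_blocks \<C> (\<lambda>C\<in>\<C>. restrict \<psi> C) = \<psi>"
proof
  fix v
  show "glue_blocks \<C> (\<lambda>C\<in>\<C>. restrict \<psi> C) v = \<psi> v"
  proof (cases "v \<in> \<Union>\<C>")
    case True
    then obtain C where C: "C \<in> \<C>" "v \<in> C" by blast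
    then show ?thesis using glue_blocks_apply[OF assms(1) C, of "\<lambda>C\<in>\<C>. restrict \<psi> C"] by simp
  next
    case False
    then show ?thesis using extensional_arb[OF assms(2) False] by (simp add: glue_blocks_def)
  qed
qed

lemma glue_blocks_in_PiE:
  assumes "pairwise disjnt \<C>" "\<And>C. C \<in> \<C> \<Longrightarrow> \<Phi> C \<in> C \<rightarrow>\<^sub>E Y"
  shows "glue_blocks \<C> \<Phi> \<in> \<Union>\<C> \<rightarrow>\<^sub>E Y"
proof (rule PiE_I)
  fix v assume "v \<in> \<Union>\<C>"
  then obtain C where C: "C \<in> \<C>" "v \<in> C" by blast
  then show "glue_blocks \<C> \<Phi> v \<in> Y"
    using glue_blocks_apply[OF assms(1) C, of \<Phi>] PiE_mem[OF assms(2) C(2)] by simp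
next
  fix v assume "v \<notin> \<Union>\<C>"
  then show "glue_blocks \<C> \<Phi> v = undefined"
    by (simp add: glue_blocks_def)
qed

lemma card_PiE_blockwise:
  fixes \<C> :: "'a set set" and Y :: "'b set"
  assumes fin: "finite \<C>" and disj: "pairwise disjnt \<C>"
    and F: "\<And>C. C \<in> \<C> \<Longrightarrow> F C \<subseteq> C \<rightarrow>\<^sub>E Y"
  shows "card {\<psi> \<in> \<Union>\<C> \<rightarrow>\<^sub>E Y. \<forall>C\<in>\<C>. restrict \<psi> C \<in> F C} = (\<Prod>C\<in>\<C>. card (F C))"
proof -
  have restrict_glue: "restrict (glue_blocks \<C> \<Phi>) C = \<Phi> C"
    if "\<Phi> \<in> (\<Pi>\<^sub>E C\<in>\<C>. F C)" "C \<in> \<C>" for \<Phi> C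
  proof (rule restrict_glue_blocks[OF disj that(2)])
    have "\<Phi> C \<in> C \<rightarrow>\<^sub>E Y"
      using F[OF that(2)] PiE_mem[OF that] by blast
    then show "\<Phi> C \<in> extensional C"
      by (simp add: PiE_def)
  qed
  have "bij_betw (\<lambda>\<psi>. \<lambda>C\<in>\<C>. restrict \<psi> C)
      {\<psi> \<in> \<Union>\<C> \<rightarrow>\<^sub>E Y. \<forall>C\<in>\<C>. restrict \<psi> C \<in> F C} (\<Pi>\<^sub>E C\<in>\<C>. F C)"
  proof (rule bij_betw_byWitness[where f'="glue_blocks \<C>"])
    show "\<forall>\<psi> \<in> {\<psi> \<in> \<Union>\<C> \<rightarrow>\<^sub>E Y. \<forall>C\<in>\<C>. restrict \<psi> C \<in> F C}.
        glue_blocks \<C> (\<lambda>C\<in>\<C>. restrict \<psi> C) = \<psi>"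
      using glue_blocks_restrict[OF disj] by (auto simp: PiE_def)
    show "\<forall>\<Phi> \<in> \<Pi>\<^sub>E C\<in>\<C>. F C. (\<lambda>C\<in>\<C>. restrict (glue_blocks \<C> \<Phi>) C) = \<Phi>"
    proof
      fix \<Phi> assume \<Phi>: "\<Phi> \<in> (\<Pi>\<^sub>E C\<in>\<C>. F C)"
      have "(\<lambda>C\<in>\<C>. restrict (glue_blocks \<C> \<Phi>) C) = restrict \<Phi> \<C>"
        using restrict_glue[OF \<Phi>] by (rule restrict_ext)
      also have "\<dots> = \<Phi>"
        using \<Phi> by (rule PiE_restrict)
      finally show "(\<lambda>C\<in>\<C>. restrict (glue_blocks \<C> \<Phi>) C) = \<Phi>" .
    qed
    show "glue_blocks \<C> ` (\<Pi>\<^sub>E C\<in>\<C>. F C) \<subseteq> {\<psi> \<in> \<Union>\<C> \<rightarrow>\<^sub>E Y. \<forall>C\<in>\<C>. restrict \<psi> C \<in> F C}"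
    proof clarify
      fix \<Phi> assume \<Phi>: "\<Phi> \<in> (\<Pi>\<^sub>E C\<in>\<C>. F C)"
      have "glue_blocks \<C> \<Phi> \<in> \<Union>\<C> \<rightarrow>\<^sub>E Y"
        using F PiE_mem[OF \<Phi>] by (intro glue_blocks_in_PiE[OF disj]) blast
      moreover have "\<forall>C\<in>\<C>. restrict (glue_blocks \<C> \<Phi>) C \<in> F C"
        using restrict_glue[OF \<Phi>] PiE_mem[OF \<Phi>] by simp
      ultimately show "glue_blocks \<C> \<Phi> \<in> \<Union>\<C> \<rightarrow>\<^sub>E Y \<and> (\<forall>C\<in>\<C>. restrict (glue_blocks \<C> \<Phi>) C \<in> F C)"
        by blast
    qed
  qed auto
  then show ?thesis
    by (simp add: bij_betw_same_card card_PiE[OF fin])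
qed

lemma funpow_pred_apply: "0 < n \<Longrightarrow> f ((f ^^ (n - 1)) x) = (f ^^ n) x"
  by (cases n) simp_all

lemma funpow_image_subset: "p ` Y \<subseteq> Y \<Longrightarrow> y \<in> Y \<Longrightarrow> (p ^^ k) y \<in> Y"
  by (induction k) auto

lemma funpow_chain_values:
  assumes "\<And>j. j < n \<Longrightarrow> p (\<phi> ((g ^^ j) x)) = \<phi> ((g ^^ Suc j) x)"
  shows "\<phi> ((g ^^ n) x) = (p ^^ n) (\<phi> x)"
  using assms
proof (induction n)
  case (Suc n)
  have "\<phi> ((g ^^ Suc n) x) = p (\<phi> ((g ^^ n) x))"
    using Suc.prems[of n] by simp
  also have "\<dots> = p ((p ^^ n) (\<phi> x))"
    using Suc by simp
  finally show ?case by simp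
qed simp

definition orbit_chain :: "('a \<Rightarrow> 'a) \<Rightarrow> 'a \<Rightarrow> ('b \<Rightarrow> 'b) \<Rightarrow> 'b \<Rightarrow> 'a \<Rightarrow> 'b" where
  "orbit_chain g x p y = (\<lambda>v\<in>orbit g x. (p ^^ funpow_dist g x v) y)"

lemma orbit_chain_start: "permutation g \<Longrightarrow> orbit_chain g x p y x = y"
  by (simp add: orbit_chain_def permutation_self_in_orbit funpow_dist_0)

lemma orbit_chain_in_PiE:
  "p ` Y \<subseteq> Y \<Longrightarrow> y \<in> Y \<Longrightarrow> orbit_chain g x p y \<in> orbit g x \<rightarrow>\<^sub>E Y"
  by (simp add: orbit_chain_def funpow_image_subset)

lemma orbit_chain_step:
  assumes g: "permutation g" and u: "u \<in> orbit g x"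
    and close: "u = (g ^^ (least_power g x - 1)) x \<Longrightarrow> (p ^^ least_power g x) y = y"
  shows "p (orbit_chain g x p y u) = orbit_chain g x p y (g u)"
proof -
  define L where "L = least_power g x"
  define d where "d = funpow_dist g x u"
  have d: "d < L" "(g ^^ d) x = u"
    using funpow_dist_less_least_power[OF g u] funpow_dist_prop[OF u] by (simp_all add: L_def d_def)
  have gu: "g u \<in> orbit g x"
    using u by (rule orbit.step)
  show ?thesis
  proof (cases "Suc d < L")
    case True
    then have "funpow_dist g x (g u) = Suc d"
      using funpow_dist_funpow[OF g, of "Suc d" x] d(2) by (simp add: L_def)
    then show ?thesis
      using u gu by (simp add: orbit_chain_def d_def)
  next
    case False
    then have d_last: "d = L - 1" using d(1) by simp
    then have "g u = x"
      using d least_power_of_permutation[OF g, of x] funpow_pred_apply[of L g x] by (simp add: L_def)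
    then have "orbit_chain g x p y (g u) = y"
      using orbit_chain_start[OF g] by simp
    moreover have "p ((p ^^ (L - 1)) y) = y"
      using close d d_last least_power_of_permutation(2)[OF g, of x] funpow_pred_apply[of L p y]
      by (simp add: L_def)
    ultimately show ?thesis
      using u d_last by (simp add: orbit_chain_def d_def)
  qed
qed

lemma orbit_chain_unique:
  assumes g: "permutation g" and \<phi>: "\<phi> \<in> orbit g x \<rightarrow>\<^sub>E Y"
    and step: "\<And>j. j < least_power g x - 1 \<Longrightarrow> p (\<phi> ((g ^^ j) x)) = \<phi> ((g ^^ Suc j) x)"
  shows "orbit_chain g x p (\<phi> x) = \<phi>"
proof
  fix v
  show "orbit_chain g x p (\<phi> x) v = \<phi> v"
  proof (cases "v \<in> orbit g x")
    case True
    have "funpow_dist g x v < least_power g x"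
      using funpow_dist_less_least_power[OF g True] .
    then have "\<phi> ((g ^^ funpow_dist g x v) x) = (p ^^ funpow_dist g x v) (\<phi> x)"
      using step by (intro funpow_chain_values) simp
    then show ?thesis
      using True funpow_dist_prop[OF True] by (simp add: orbit_chain_def)
  next
    case False
    then show ?thesis
      using PiE_arb[OF \<phi> False] by (simp add: orbit_chain_def)
  qed
qed

lemma chain_start_fixed:
  assumes g: "permutation g" and U: "\<And>j. j < least_power g x - 1 \<Longrightarrow> (g ^^ j) x \<in> U"
    and cons: "\<forall>u\<in>U. p (\<phi> u) = \<phi> (g u)" and last: "(g ^^ (least_power g x - 1)) x \<in> U"
  shows "(p ^^ least_power g x) (\<phi> x) = \<phi> x"
proof -
  define L where "L = least_power g x"
  have "(g ^^ j) x \<in> U" if "j < L" for j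
  proof (cases "j < L - 1")
    case False
    then have "j = L - 1" using that by simp
    then show ?thesis using last by (simp add: L_def)
  qed (use U in \<open>simp add: L_def\<close>)
  then have "\<phi> ((g ^^ L) x) = (p ^^ L) (\<phi> x)"
    using cons by (intro funpow_chain_values) simp
  then show ?thesis
    using least_power_of_permutation(1)[OF g] by (simp add: L_def)
qed

text \<open>Such a function is determined by its value at x, and the constraint at the last vertex
  of the orbit, if it is imposed, makes that value a fixed point of p ^^ least_power g x.\<close>
lemma card_orbit_chain_funcs:
  assumes g: "permutation g" and pY: "p ` Y \<subseteq> Y"
    and U: "U \<subseteq> orbit g x" "\<And>j. j < least_power g x - 1 \<Longrightarrow> (g ^^ j) x \<in> U"
  shows "card {\<phi> \<in> orbit g x \<rightarrow>\<^sub>E Y. \<forall>u\<in>U. p (\<phi> u) = \<phi> (g u)}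
    = card {y \<in> Y. (g ^^ (least_power g x - 1)) x \<in> U \<longrightarrow> (p ^^ least_power g x) y = y}"
proof -
  define L where "L = least_power g x"
  define A where "A = {\<phi> \<in> orbit g x \<rightarrow>\<^sub>E Y. \<forall>u\<in>U. p (\<phi> u) = \<phi> (g u)}"
  define T where "T = {y \<in> Y. (g ^^ (L - 1)) x \<in> U \<longrightarrow> (p ^^ L) y = y}"
  have "bij_betw (\<lambda>\<phi>. \<phi> x) A T"
  proof (rule bij_betw_byWitness[where f'="orbit_chain g x p"])
    show "\<forall>\<phi>\<in>A. orbit_chain g x p (\<phi> x) = \<phi>"
      using U(2) by (auto simp: A_def intro!: orbit_chain_unique[OF g])
    show "\<forall>y\<in>T. orbit_chain g x p y x = y"
      by (simp add: orbit_chain_start[OF g])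
    show "(\<lambda>\<phi>. \<phi> x) ` A \<subseteq> T"
    proof clarify
      fix \<phi> assume "\<phi> \<in> A"
      then have \<phi>: "\<phi> \<in> orbit g x \<rightarrow>\<^sub>E Y" and cons: "\<forall>u\<in>U. p (\<phi> u) = \<phi> (g u)"
        by (simp_all add: A_def)
      have "(p ^^ L) (\<phi> x) = \<phi> x" if "(g ^^ (L - 1)) x \<in> U"
        using chain_start_fixed[OF g U(2) cons] that by (simp add: L_def)
      moreover have "\<phi> x \<in> Y"
        using \<phi> permutation_self_in_orbit[OF g] by blast
      ultimately show "\<phi> x \<in> T"
        by (simp add: T_def)
    qed
    show "orbit_chain g x p ` T \<subseteq> A"
    proof clarify
      fix y assume "y \<in> T"
      then have y: "y \<in> Y" and close: "(g ^^ (L - 1)) x \<in> U \<longrightarrow> (p ^^ L) y = y"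
        by (simp_all add: T_def)
      have "p (orbit_chain g x p y u) = orbit_chain g x p y (g u)" if "u \<in> U" for u
        using that U(1) close by (intro orbit_chain_step[OF g]) (auto simp: L_def)
      then show "orbit_chain g x p y \<in> A"
        using orbit_chain_in_PiE[OF pY y] by (simp add: A_def)
    qed
  qed
  then show ?thesis
    unfolding A_def T_def L_def by (rule bij_betw_same_card)
qed

lemma card_orbit_cycle_funcs:
  assumes g: "permutation g" and pY: "p ` Y \<subseteq> Y"
  shows "card {\<phi> \<in> orbit g x \<rightarrow>\<^sub>E Y. \<forall>u\<in>orbit g x. p (\<phi> u) = \<phi> (g u)}
    = card {y \<in> Y. (p ^^ card (orbit g x)) y = y}"
proof -
  have "(g ^^ j) x \<in> orbit g x" for j
    by (simp add: orbit_altdef_permutation[OF g] exI[of _ j])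
  then show ?thesis
    using card_orbit_chain_funcs[OF g pY subset_refl] by (simp add: card_orbit_eq_least_power[OF g])
qed

lemma card_orbit_path_funcs:
  assumes g: "permutation g" and pY: "p ` Y \<subseteq> Y" and t: "t \<in> orbit g x"
  shows "card {\<phi> \<in> orbit g x \<rightarrow>\<^sub>E Y. \<forall>u \<in> orbit g x - {t}. p (\<phi> u) = \<phi> (g u)} = card Y"
proof -
  have t_orbit: "orbit g t = orbit g x"
    using g t by (rule permutation_orbit_eq)
  have gt_orbit: "orbit g (g t) = orbit g x"
    using g orbit.step[OF t] by (rule permutation_orbit_eq)
  define L where "L = least_power g (g t)"
  have L: "L = least_power g t"
    using t_orbit gt_orbit card_orbit_eq_least_power[OF g] unfolding L_def by metis
  have last: "(g ^^ (L - 1)) (g t) = t"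
    using least_power_of_permutation[OF g, of t] L funpow_pred_apply[of L g t]
    by (simp add: funpow_swap1)
  have "(g ^^ j) (g t) \<in> orbit g x - {t}" if j: "j < L - 1" for j
  proof -
    have "(g ^^ Suc j) t \<noteq> t"
    proof
      assume "(g ^^ Suc j) t = t"
      then have "least_power g t \<le> Suc j"
        by (rule least_power_le) simp
      with j L show False by simp
    qed
    then have "(g ^^ j) (g t) \<noteq> t"
      by (simp add: funpow_swap1)
    moreover have "(g ^^ j) (g t) \<in> orbit g t"
      by (rule funpow_in_orbit[OF orbit.base])
    ultimately show ?thesis
      using t_orbit by blast
  qed
  then have "card {\<phi> \<in> orbit g (g t) \<rightarrow>\<^sub>E Y. \<forall>u \<in> orbit g x - {t}. p (\<phi> u) = \<phi> (g u)}
      = card {y \<in> Y. (g ^^ (L - 1)) (g t) \<in> orbit g x - {t} \<longrightarrow> (p ^^ L) y = y}"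
    unfolding L_def by (intro card_orbit_chain_funcs[OF g pY]) (use gt_orbit in auto)
  then show ?thesis
    using gt_orbit last by simp
qed

lemma orbits_partition:
  assumes "g permutes V" "finite V"
  shows "\<Union>(orbit g ` V) = V" "pairwise disjnt (orbit g ` V)"
proof -
  have perm: "permutation g"
    using assms permutation_permutes by blast
  show "\<Union>(orbit g ` V) = V"
    using permutation_self_in_orbit[OF perm] permutes_orbit_subset[OF assms(1)] by blast
  show "pairwise disjnt (orbit g ` V)"
    using permutation_orbit_eq[OF perm] unfolding pairwise_def disjnt_def by blast
qed

lemma constraint_iff_orbitwise:
  assumes g: "g permutes V" and V: "finite V" and U: "U \<subseteq> V" and \<psi>: "\<psi> \<in> V \<rightarrow>\<^sub>E Y"
  shows "(\<forall>u\<in>U. p (\<psi> u) = \<psi> (g u)) \<longleftrightarrow> (\<forall>C \<in> orbit g ` V.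
      restrict \<psi> C \<in> {\<phi> \<in> C \<rightarrow>\<^sub>E Y. \<forall>u \<in> U \<inter> C. p (\<phi> u) = \<phi> (g u)})"
proof -
  have perm: "permutation g"
    using g V permutation_permutes by blast
  have closed: "g u \<in> C" if "C \<in> orbit g ` V" "u \<in> C" for C u
    using that by (auto intro: orbit.step)
  have restrict: "restrict \<psi> C \<in> C \<rightarrow>\<^sub>E Y" if "C \<in> orbit g ` V" for C
    unfolding restrict_PiE_iff using \<psi> that permutes_orbit_subset[OF g] by (blast intro: PiE_mem)
  have own_orbit: "orbit g u \<in> orbit g ` V" "u \<in> orbit g u" if "u \<in> U" for u
    using that U permutation_self_in_orbit[OF perm] by auto
  show ?thesis
  proof
    assume "\<forall>u\<in>U. p (\<psi> u) = \<psi> (g u)"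
    then show "\<forall>C \<in> orbit g ` V. restrict \<psi> C \<in> {\<phi> \<in> C \<rightarrow>\<^sub>E Y. \<forall>u \<in> U \<inter> C. p (\<phi> u) = \<phi> (g u)}"
      using restrict closed by simp
  next
    assume "\<forall>C \<in> orbit g ` V. restrict \<psi> C \<in> {\<phi> \<in> C \<rightarrow>\<^sub>E Y. \<forall>u \<in> U \<inter> C. p (\<phi> u) = \<phi> (g u)}"
    then show "\<forall>u\<in>U. p (\<psi> u) = \<psi> (g u)"
      using own_orbit closed by fastforce
  qed
qed

lemma card_funcs_prod_orbits:
  assumes g: "g permutes V" and V: "finite V" and U: "U \<subseteq> V"
  shows "card {\<psi> \<in> V \<rightarrow>\<^sub>E Y. \<forall>u\<in>U. p (\<psi> u) = \<psi> (g u)}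
    = (\<Prod>C \<in> orbit g ` V. card {\<phi> \<in> C \<rightarrow>\<^sub>E Y. \<forall>u \<in> U \<inter> C. p (\<phi> u) = \<phi> (g u)})"
proof -
  have "{\<psi> \<in> V \<rightarrow>\<^sub>E Y. \<forall>u\<in>U. p (\<psi> u) = \<psi> (g u)}
      = {\<psi> \<in> \<Union>(orbit g ` V) \<rightarrow>\<^sub>E Y. \<forall>C \<in> orbit g ` V.
          restrict \<psi> C \<in> {\<phi> \<in> C \<rightarrow>\<^sub>E Y. \<forall>u \<in> U \<inter> C. p (\<phi> u) = \<phi> (g u)}}"
    unfolding orbits_partition(1)[OF g V] using constraint_iff_orbitwise[OF g V U] by blast
  also have "card \<dots> = (\<Prod>C \<in> orbit g ` V. card {\<phi> \<in> C \<rightarrow>\<^sub>E Y. \<forall>u \<in> U \<inter> C. p (\<phi> u) = \<phi> (g u)})"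
    by (rule card_PiE_blockwise[OF _ orbits_partition(2)[OF g V]]) (use V in auto)
  finally show ?thesis .
qed

section \<open>The counting polynomial\<close>

definition cycle_path_count :: "nat multiset \<Rightarrow> nat multiset \<Rightarrow> nat \<Rightarrow> (nat \<Rightarrow> nat) \<Rightarrow> int" where
  "cycle_path_count mu nu n ms = int n ^ size nu * (\<Prod>L\<in>#mu. \<Sum>d | d dvd L. int d * int (ms d))"

lemma poly_nm_fun_divisor_sum:
  assumes "0 < L" "L \<le> k"
  shows "poly_nm_fun k L (\<lambda>n ms. \<Sum>d | d dvd L. int d * int (ms d))"
proof (rule poly_nm_fun_sum)
  fix d assume "d \<in> {d. d dvd L}"
  then have d: "1 \<le> d" "d \<le> L"
    using assms by (auto intro: dvd_imp_le Suc_leI dvd_pos_nat)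
  have "poly_nm_fun k (0 + d) (\<lambda>n ms. int d * int (ms d))"
    using d assms by (intro poly_nm_fun_mult poly_nm_fun_const poly_nm_fun_var_m) auto
  then show "poly_nm_fun k L (\<lambda>n ms. int d * int (ms d))"
    using d by (auto intro: poly_nm_fun_mono)
qed (use assms in simp)

lemma poly_nm_fun_cycle_path_count:
  assumes mu: "is_partition mu" and nu: "is_partition nu" and k: "sum_mset mu + sum_mset nu = k"
  shows "poly_nm_fun k k (cycle_path_count mu nu)"
proof -
  have "poly_nm_fun k (sum_mset mu) (\<lambda>n ms. \<Prod>L\<in>#mu. \<Sum>d | d dvd L. int d * int (ms d))"
  proof (rule poly_nm_fun_prod_mset)
    fix L assume L: "L \<in># mu"
    then obtain rest where "mu = add_mset L rest"
      by (blast dest: multi_member_split)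
    then have "L \<le> k" using k by simp
    moreover have "0 < L" using L mu by (simp add: is_partition_def)
    ultimately show "poly_nm_fun k L (\<lambda>n ms. \<Sum>d | d dvd L. int d * int (ms d))"
      by (rule poly_nm_fun_divisor_sum[rotated])
  qed
  then have "poly_nm_fun k (size nu + sum_mset mu) (cycle_path_count mu nu)"
    unfolding cycle_path_count_def[abs_def] by (rule poly_nm_fun_mult[OF poly_nm_fun_power_n])
  moreover have "size nu \<le> sum_mset nu"
    unfolding size_eq_sum_mset using nu sum_mset_mono[of nu "\<lambda>_. 1" id]
    by (force simp: is_partition_def)
  ultimately show ?thesis
    using k by (auto intro: poly_nm_fun_mono)
qed

lemma of_nat_prod_mset: "of_nat (\<Prod>x\<in>#M. f x) = (\<Prod>x\<in>#M. of_nat (f x))"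
  by (induction M) auto

section \<open>The graph of a partial permutation\<close>

locale partial_perm_graph =
  fixes I J :: "nat list"
  assumes partial_perm_IJ: "partial_perm I J"
begin

definition succ_vertex :: "nat \<Rightarrow> nat" where
  "succ_vertex v = the (map_of (zip I J) v)"

definition pred_vertex :: "nat \<Rightarrow> nat" where
  "pred_vertex w = the (map_of (zip J I) w)"

definition vertices :: "nat set" where
  "vertices = set I \<union> set J"

lemma length_eq: "length I = length J" and distinct_I: "distinct I" and distinct_J: "distinct J"
  using partial_perm_IJ unfolding partial_perm_def by auto

lemma finite_vertices: "finite vertices"
  unfolding vertices_def by simp

lemma succ_vertex_nth: "l < length I \<Longrightarrow> succ_vertex (I ! l) = J ! l"
  unfolding succ_vertex_def using map_of_zip_nth[OF length_eq distinct_I] length_eq by simp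

lemma pred_vertex_nth: "l < length I \<Longrightarrow> pred_vertex (J ! l) = I ! l"
  unfolding pred_vertex_def using map_of_zip_nth[OF length_eq[symmetric] distinct_J] length_eq by simp

lemma succ_vertex_in_J: "u \<in> set I \<Longrightarrow> succ_vertex u \<in> set J"
  by (auto simp: in_set_conv_nth succ_vertex_nth length_eq)

lemma pred_vertex_in_I: "w \<in> set J \<Longrightarrow> pred_vertex w \<in> set I"
  using length_eq by (auto simp: in_set_conv_nth pred_vertex_nth)

lemma succ_pred_vertex: "w \<in> set J \<Longrightarrow> succ_vertex (pred_vertex w) = w"
  using length_eq by (auto simp: in_set_conv_nth pred_vertex_nth succ_vertex_nth)

lemma pred_succ_vertex: "u \<in> set I \<Longrightarrow> pred_vertex (succ_vertex u) = u"
  using length_eq by (auto simp: in_set_conv_nth pred_vertex_nth succ_vertex_nth)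

lemma pp_edges_iff: "(u, w) \<in> pp_edges I J \<longleftrightarrow> u \<in> set I \<and> w = succ_vertex u"
proof -
  have "(u, w) \<in> pp_edges I J \<longleftrightarrow> (\<exists>l < length I. u = I ! l \<and> w = J ! l)"
    unfolding pp_edges_def in_set_zip using length_eq by auto
  also have "\<dots> \<longleftrightarrow> u \<in> set I \<and> w = succ_vertex u"
    by (auto simp: in_set_conv_nth succ_vertex_nth)
  finally show ?thesis .
qed

lemma funpow_succ_funpow_pred:
  assumes "\<And>a. a < i \<Longrightarrow> (pred_vertex ^^ a) w \<in> set J"
  shows "(succ_vertex ^^ i) ((pred_vertex ^^ i) w) = w"
  using assms
proof (induction i arbitrary: w)
  case (Suc i)
  have "(succ_vertex ^^ i) ((pred_vertex ^^ i) (pred_vertex w)) = pred_vertex w"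
    using Suc.prems[of "Suc _"] by (intro Suc.IH) (simp add: funpow_swap1)
  then show ?case
    using Suc.prems[of 0] succ_pred_vertex by (simp add: funpow_swap1)
qed simp

text \<open>Otherwise the backward walk from t would be periodic, which puts t on a cycle of the
  graph and hence in set I.\<close>
lemma pred_walk_leaves_J:
  assumes "t \<notin> set I"
  shows "\<exists>a. (pred_vertex ^^ a) t \<notin> set J"
proof (rule ccontr)
  assume "\<nexists>a. (pred_vertex ^^ a) t \<notin> set J"
  then have in_J: "(pred_vertex ^^ a) t \<in> set J" for a by blast
  then have "finite (range (\<lambda>a. (pred_vertex ^^ a) t))"
    by (meson finite_set finite_subset image_subsetI)
  then have "\<not> inj (\<lambda>a. (pred_vertex ^^ a) t)"
    using finite_imageD infinite_UNIV_nat by blast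
  then obtain i j where "i \<noteq> j" "(pred_vertex ^^ i) t = (pred_vertex ^^ j) t"
    unfolding inj_def by blast
  then obtain i j where ij: "i < j" "(pred_vertex ^^ i) t = (pred_vertex ^^ j) t"
    by (metis linorder_neqE_nat)
  define d where "d = j - i - 1"
  have j: "j = i + Suc d"
    using ij(1) unfolding d_def by simp
  have "t = (succ_vertex ^^ i) ((pred_vertex ^^ i) t)"
    using in_J by (simp add: funpow_succ_funpow_pred)
  also have "\<dots> = (succ_vertex ^^ i) ((pred_vertex ^^ i) ((pred_vertex ^^ Suc d) t))"
    using ij(2) unfolding j funpow_add by simp
  also have "\<dots> = (pred_vertex ^^ Suc d) t"
    by (rule funpow_succ_funpow_pred) (metis in_J funpow_add comp_apply)
  finally have "t = pred_vertex ((pred_vertex ^^ d) t)"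
    by simp
  then have "t \<in> set I"
    using pred_vertex_in_I[OF in_J[of d]] by simp
  with assms show False ..
qed

text \<open>For t on a cycle the backward walk never leaves set J, so path_len t is a junk value.\<close>
definition path_len :: "nat \<Rightarrow> nat" where
  "path_len t = (LEAST a. (pred_vertex ^^ a) t \<notin> set J)"

definition path_start :: "nat \<Rightarrow> nat" where
  "path_start t = (pred_vertex ^^ path_len t) t"

lemma path_start_notin_J: "t \<notin> set I \<Longrightarrow> path_start t \<notin> set J"
  unfolding path_start_def path_len_def by (rule LeastI_ex) (rule pred_walk_leaves_J)

lemma funpow_pred_in_J: "a < path_len t \<Longrightarrow> (pred_vertex ^^ a) t \<in> set J"
  unfolding path_len_def using not_less_Least by blast

lemma funpow_succ_path_start:
  assumes "i \<le> path_len t"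
  shows "(succ_vertex ^^ i) (path_start t) = (pred_vertex ^^ (path_len t - i)) t"
proof -
  have "path_start t = (pred_vertex ^^ i) ((pred_vertex ^^ (path_len t - i)) t)"
    unfolding path_start_def using assms by (metis funpow_add le_add_diff_inverse comp_apply)
  moreover have "(pred_vertex ^^ a) ((pred_vertex ^^ (path_len t - i)) t) \<in> set J" if "a < i" for a
  proof -
    have "a + (path_len t - i) < path_len t"
      using that assms by simp
    then show ?thesis
      using funpow_pred_in_J by (metis funpow_add comp_apply)
  qed
  ultimately show ?thesis
    by (simp add: funpow_succ_funpow_pred)
qed

lemma funpow_succ_path_start_in_I:
  assumes "i < path_len t"
  shows "(succ_vertex ^^ i) (path_start t) \<in> set I"
proof -
  have "path_len t - i = Suc (path_len t - i - 1)"
    using assms by simp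
  then have "(succ_vertex ^^ i) (path_start t) = pred_vertex ((pred_vertex ^^ (path_len t - i - 1)) t)"
    using funpow_succ_path_start[of i t] assms by simp
  then show ?thesis
    using pred_vertex_in_I funpow_pred_in_J[of "path_len t - i - 1" t] assms by simp
qed

lemma funpow_succ_path_len: "(succ_vertex ^^ path_len t) (path_start t) = t"
  by (simp add: funpow_succ_path_start)

lemma path_start_in_vertices:
  assumes "t \<in> vertices"
  shows "path_start t \<in> vertices"
proof (cases "path_len t")
  case 0
  then show ?thesis using assms by (simp add: path_start_def)
next
  case (Suc a)
  then have "(pred_vertex ^^ a) t \<in> set J"
    using funpow_pred_in_J by simp
  then show ?thesis
    using Suc pred_vertex_in_I by (simp add: path_start_def vertices_def)
qed

lemma path_start_inj:
  assumes "t1 \<notin> set I" "t2 \<notin> set I" "path_start t1 = path_start t2"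
  shows "t1 = t2"
proof (cases "path_len t1" "path_len t2" rule: linorder_cases)
  case less
  then have "t1 \<in> set I"
    using funpow_succ_path_start_in_I funpow_succ_path_len[of t1] assms(3) by metis
  with assms(1) show ?thesis ..
next
  case equal
  then show ?thesis
    using funpow_succ_path_len assms(3) by metis
next
  case greater
  then have "t2 \<in> set I"
    using funpow_succ_path_start_in_I funpow_succ_path_len[of t2] assms(3) by metis
  with assms(2) show ?thesis ..
qed

definition close_paths :: "nat \<Rightarrow> nat" where
  "close_paths u = (if u \<in> set I then succ_vertex u else if u \<in> vertices then path_start u else u)"

lemma inj_on_close_paths: "inj_on close_paths vertices"
proof
  fix u1 u2
  assume "u1 \<in> vertices" "u2 \<in> vertices" and eq: "close_paths u1 = close_paths u2"
  then consider "u1 \<in> set I" "u2 \<in> set I" | "u1 \<in> set I" "u2 \<notin> set I" | "u1 \<notin> set I" "u2 \<in> set I"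
    | "u1 \<notin> set I" "u2 \<notin> set I" "path_start u1 = path_start u2"
    unfolding close_paths_def by (metis (full_types))
  then show "u1 = u2"
  proof cases
    case 1
    then show ?thesis using eq pred_succ_vertex unfolding close_paths_def by metis
  next
    case 2
    then show ?thesis using eq succ_vertex_in_J path_start_notin_J \<open>u2 \<in> vertices\<close>
      unfolding close_paths_def by metis
  next
    case 3
    then show ?thesis using eq succ_vertex_in_J path_start_notin_J \<open>u1 \<in> vertices\<close>
      unfolding close_paths_def by metis
  next
    case 4
    then show ?thesis by (rule path_start_inj)
  qed
qed

lemma close_paths_permutes: "close_paths permutes vertices"
proof (rule bij_imp_permutes)
  have "close_paths ` vertices \<subseteq> vertices"
    using succ_vertex_in_J path_start_in_vertices by (auto simp: close_paths_def vertices_def)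
  then show "bij_betw close_paths vertices vertices"
    unfolding bij_betw_def using endo_inj_surj[OF finite_vertices _ inj_on_close_paths] inj_on_close_paths
    by blast
qed (simp add: close_paths_def vertices_def)

lemma permutation_close_paths: "permutation close_paths"
  using close_paths_permutes finite_vertices permutation_permutes by blast

lemma funpow_close_paths_path_end:
  assumes "t \<in> vertices" "t \<notin> set I" "i \<le> path_len t"
  shows "(close_paths ^^ Suc i) t = (succ_vertex ^^ i) (path_start t)"
  using assms(3)
proof (induction i)
  case 0
  then show ?case using assms(1,2) by (simp add: close_paths_def)
next
  case (Suc i)
  then show ?case
    using funpow_succ_path_start_in_I[of i t] by (simp add: close_paths_def)
qed

lemma orbit_close_paths_path_end:
  assumes "t \<in> vertices" "t \<notin> set I"
  shows "orbit close_paths t - {t} \<subseteq> set I"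
proof
  fix z
  assume z: "z \<in> orbit close_paths t - {t}"
  have period: "(close_paths ^^ Suc (path_len t)) t = t"
    using funpow_close_paths_path_end[OF assms] funpow_succ_path_len by simp
  obtain m where m: "m < Suc (path_len t)" "z = (close_paths ^^ m) t"
    using z unfolding orbit_altdef_bounded[OF period zero_less_Suc] by auto
  then obtain i where "m = Suc i" using z by (cases m) auto
  then show "z \<in> set I"
    using m z funpow_close_paths_path_end[OF assms, of i] funpow_succ_path_start_in_I[of i t]
      funpow_succ_path_len[of t] by (cases "i = path_len t") auto
qed

abbreviation linked :: "(nat \<times> nat) set" where
  "linked \<equiv> (pp_edges I J \<union> (pp_edges I J)\<inverse>)\<^sup>*"

lemma close_paths_linked:
  assumes "u \<in> vertices"
  shows "(u, close_paths u) \<in> linked"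
proof (cases "u \<in> set I")
  case True
  then show ?thesis by (auto simp: close_paths_def pp_edges_iff)
next
  case False
  have "(path_start u, (succ_vertex ^^ i) (path_start u)) \<in> (pp_edges I J)\<^sup>*" if "i \<le> path_len u" for i
    using that
  proof (induction i)
    case (Suc i)
    then have "((succ_vertex ^^ i) (path_start u), (succ_vertex ^^ Suc i) (path_start u)) \<in> pp_edges I J"
      using funpow_succ_path_start_in_I by (simp add: pp_edges_iff)
    with Suc show ?case by (meson Suc_leD rtrancl.rtrancl_into_rtrancl)
  qed simp
  from this[of "path_len u"] have "(path_start u, u) \<in> (pp_edges I J)\<^sup>*"
    by (simp add: funpow_succ_path_len)
  then have "(u, path_start u) \<in> ((pp_edges I J)\<inverse>)\<^sup>*"
    by (simp add: rtrancl_converse)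
  then have "(u, path_start u) \<in> linked"
    by (rule rtrancl_mono[THEN subsetD, rotated]) blast
  then show ?thesis
    using False assms by (simp add: close_paths_def)
qed

lemma linked_imp_in_orbit: "(v, w) \<in> linked \<Longrightarrow> w \<in> orbit close_paths v"
proof (induction rule: rtrancl_induct)
  case base
  show ?case by (rule permutation_self_in_orbit[OF permutation_close_paths])
next
  case (step y z)
  have y_orbit: "orbit close_paths y = orbit close_paths v"
    using permutation_close_paths step.IH by (rule permutation_orbit_eq)
  from step.hyps(2) consider "z = close_paths y" | "y = close_paths z"
    by (auto simp: pp_edges_iff close_paths_def)
  then show ?case
  proof cases
    case 1
    then show ?thesis
      using y_orbit orbit.base[of close_paths y] by simp
  next
    case 2
    then have "orbit close_paths z = orbit close_paths v"
      using y_orbit permutation_orbit_step[OF permutation_close_paths] by simp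
    then show ?thesis
      using permutation_self_in_orbit[OF permutation_close_paths] by blast
  qed
qed

lemma in_orbit_imp_linked:
  assumes v: "v \<in> vertices" and w: "w \<in> orbit close_paths v"
  shows "(v, w) \<in> linked"
proof -
  have "(v, (close_paths ^^ n) v) \<in> linked" for n
  proof (induction n)
    case (Suc n)
    have "(close_paths ^^ n) v \<in> vertices"
      using v close_paths_permutes by (simp add: permutes_in_image permutes_funpow)
    then show ?case
      using Suc close_paths_linked by (simp add: rtrancl_trans)
  qed simp
  moreover obtain n where "w = (close_paths ^^ n) v"
    using w by (auto simp: orbit_altdef)
  ultimately show ?thesis by simp
qed

lemma pp_components_eq_orbits: "pp_components I J = orbit close_paths ` vertices"
proof -
  have "linked `` {v} = orbit close_paths v" if "v \<in> vertices" for v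
    using linked_imp_in_orbit in_orbit_imp_linked[OF that] by blast
  then show ?thesis
    unfolding pp_components_def vertices_def by (intro image_cong refl) simp
qed

lemma comp_edges_eq_card: "comp_edges I J C = card (C \<inter> set I)"
proof -
  have "bij_betw ((!) I) {l. l < length I \<and> I ! l \<in> C} (C \<inter> set I)"
    using distinct_I by (auto simp: bij_betw_def inj_on_def nth_eq_iff_index_eq in_set_conv_nth)
  then show ?thesis
    unfolding comp_edges_def by (rule bij_betw_same_card)
qed

lemma num_compatible_eq_card_funcs:
  assumes "packed I J m"
  shows "num_compatible I J m p n
    = card {\<psi> \<in> vertices \<rightarrow>\<^sub>E {1..n}. \<forall>u\<in>set I. p (\<psi> u) = \<psi> (close_paths u)}"
proof -
  have "vertices = {1..m}"
    using assms by (simp add: packed_def vertices_def)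
  moreover have "(\<forall>l < length I. p (\<psi> (I ! l)) = \<psi> (J ! l))
      \<longleftrightarrow> (\<forall>u\<in>set I. p (\<psi> u) = \<psi> (close_paths u))" for \<psi>
  proof
    assume "\<forall>l < length I. p (\<psi> (I ! l)) = \<psi> (J ! l)"
    then show "\<forall>u\<in>set I. p (\<psi> u) = \<psi> (close_paths u)"
      by (auto simp: in_set_conv_nth close_paths_def succ_vertex_nth)
  next
    assume "\<forall>u\<in>set I. p (\<psi> u) = \<psi> (close_paths u)"
    then show "\<forall>l < length I. p (\<psi> (I ! l)) = \<psi> (J ! l)"
      using nth_mem by (fastforce simp: close_paths_def succ_vertex_nth)
  qed
  ultimately show ?thesis
    unfolding num_compatible_def by simp
qed

lemma card_compatible_on_cycle:
  assumes "C \<in> pp_components I J" "is_cycle_comp I J C" "p ` Y \<subseteq> Y"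
  shows "card {\<phi> \<in> C \<rightarrow>\<^sub>E Y. \<forall>u \<in> set I \<inter> C. p (\<phi> u) = \<phi> (close_paths u)}
    = card {y \<in> Y. (p ^^ comp_edges I J C) y = y}"
proof -
  obtain x where C: "C = orbit close_paths x" "C \<subseteq> set I"
    using assms(1,2) by (auto simp: pp_components_eq_orbits is_cycle_comp_def)
  then show ?thesis
    using card_orbit_cycle_funcs[OF permutation_close_paths assms(3), of x]
    by (simp add: comp_edges_eq_card Int_absorb1 Int_absorb2)
qed

lemma card_compatible_on_path:
  assumes "C \<in> pp_components I J" "\<not> is_cycle_comp I J C" "p ` Y \<subseteq> Y"
  shows "card {\<phi> \<in> C \<rightarrow>\<^sub>E Y. \<forall>u \<in> set I \<inter> C. p (\<phi> u) = \<phi> (close_paths u)} = card Y"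
proof -
  obtain x t where x: "x \<in> vertices" "C = orbit close_paths x" and t: "t \<in> C" "t \<notin> set I"
    using assms(1,2) by (auto simp: pp_components_eq_orbits is_cycle_comp_def)
  have "t \<in> vertices" "C = orbit close_paths t"
    using t x permutes_orbit_subset[OF close_paths_permutes]
      permutation_orbit_eq[OF permutation_close_paths] by blast+
  then have "set I \<inter> C = C - {t}"
    using orbit_close_paths_path_end t by blast
  then show ?thesis
    using card_orbit_path_funcs[OF permutation_close_paths assms(3), of t x] t(1) x(2) by simp
qed

lemma num_compatible_eq_prod:
  assumes packed: "packed I J m" and p: "p permutes {1..n}"
  shows "num_compatible I J m p n
    = n ^ size (path_part I J) * (\<Prod>L\<in>#cycle_part I J. card {y \<in> {1..n}. (p ^^ L) y = y})"
proof -
  define count_on where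
    "count_on C = card {\<phi> \<in> C \<rightarrow>\<^sub>E {1..n}. \<forall>u \<in> set I \<inter> C. p (\<phi> u) = \<phi> (close_paths u)}" for C
  define cycles where "cycles = {C \<in> pp_components I J. is_cycle_comp I J C}"
  define paths where "paths = {C \<in> pp_components I J. \<not> is_cycle_comp I J C}"
  have pY: "p ` {1..n} \<subseteq> {1..n}"
    using p by (simp add: permutes_image)
  have "pp_components I J = cycles \<union> paths" "cycles \<inter> paths = {}"
    by (auto simp: cycles_def paths_def)
  moreover have "finite (pp_components I J)"
    unfolding pp_components_eq_orbits using finite_vertices by simp
  moreover have "num_compatible I J m p n = (\<Prod>C \<in> pp_components I J. count_on C)"
    unfolding num_compatible_eq_card_funcs[OF packed] pp_components_eq_orbits count_on_def
    by (rule card_funcs_prod_orbits[OF close_paths_permutes finite_vertices])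
      (simp add: vertices_def)
  ultimately have "num_compatible I J m p n = (\<Prod>C\<in>cycles. count_on C) * (\<Prod>C\<in>paths. count_on C)"
    by (simp add: prod.union_disjoint)
  also have "\<dots> = (\<Prod>C\<in>cycles. card {y \<in> {1..n}. (p ^^ comp_edges I J C) y = y}) * (\<Prod>C\<in>paths. n)"
    using card_compatible_on_cycle[OF _ _ pY] card_compatible_on_path[OF _ _ pY]
    by (simp add: count_on_def cycles_def paths_def)
  finally show ?thesis
    by (simp add: cycle_part_def path_part_def cycles_def paths_def prod_unfold_prod_mset
        image_mset.compositionality o_def)
qed

lemma cycle_part_pos: "L \<in># cycle_part I J \<Longrightarrow> 0 < L"
proof -
  assume "L \<in># cycle_part I J"
  then obtain C where C: "C \<in> pp_components I J" "C \<subseteq> set I" "L = comp_edges I J C"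
    using finite_vertices
    by (auto simp: cycle_part_def is_cycle_comp_def pp_components_eq_orbits)
  moreover have "C \<noteq> {}"
    using C(1) orbit_nonempty[of close_paths] by (force simp: pp_components_eq_orbits)
  ultimately show "0 < L"
    using finite_subset[OF C(2)] by (simp add: comp_edges_eq_card Int_absorb2 card_gt_0_iff)
qed

lemma num_compatible_eq_cycle_path_count:
  assumes "packed I J m" and p: "p permutes {1..n}"
  shows "int (num_compatible I J m p n)
    = cycle_path_count (cycle_part I J) (path_part I J) n (count (cycle_type p {1..n}))"
proof -
  have "card {y \<in> {1..n}. (p ^^ L) y = y} = (\<Sum>d | d dvd L. d * count (cycle_type p {1..n}) d)"
    if "L \<in># cycle_part I J" for L
    using card_fixpoints_funpow[OF p] cycle_part_pos[OF that] by simp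
  then have "(\<Prod>L\<in>#cycle_part I J. int (card {y \<in> {1..n}. (p ^^ L) y = y}))
      = (\<Prod>L\<in>#cycle_part I J. \<Sum>d | d dvd L. int d * int (count (cycle_type p {1..n}) d))"
    by (intro arg_cong[where f=prod_mset] image_mset_cong) simp
  then show ?thesis
    using num_compatible_eq_prod[OF assms] by (simp add: cycle_path_count_def of_nat_prod_mset)
qed

end

theorem proposition3p1:
  fixes mu nu :: "nat multiset" and k :: nat
  assumes "is_partition mu" and "is_partition nu"
    and "sum_mset mu + sum_mset nu = k"
    and "\<exists>I J. partial_perm I J \<and> cycle_part I J = mu \<and> path_part I J = nu"
  shows "\<exists>P. is_poly_nm k P \<and> (\<forall>e. P e \<noteq> 0 \<longrightarrow> wdeg k e \<le> k) \<and>
           (\<forall>n lam p I J m. is_partition_of lam n \<longrightarrow> p permutes {1..n} \<longrightarrow>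
              cycle_type p {1..n} = lam \<longrightarrow> packed I J m \<longrightarrow>
              cycle_part I J = mu \<longrightarrow> path_part I J = nu \<longrightarrow>
              int (num_compatible I J m p n) = eval_poly_nm k P n (\<lambda>i. count lam i))"
proof -
  obtain P where P: "is_poly_nm k P" "\<forall>e. P e \<noteq> 0 \<longrightarrow> wdeg k e \<le> k"
    "\<And>n ms. cycle_path_count mu nu n ms = eval_poly_nm k P n ms"
    using poly_nm_fun_cycle_path_count[OF assms(1-3)] unfolding poly_nm_fun_def by blast
  show ?thesis
  proof (intro exI[of _ P] conjI P(1,2) allI impI)
    fix n lam p I J m
    assume p: "p permutes {1..n}" and lam: "cycle_type p {1..n} = lam"
      and IJ: "packed I J m" "cycle_part I J = mu" "path_part I J = nu"
    interpret partial_perm_graph I J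
      using IJ(1) by unfold_locales (simp add: packed_def)
    show "int (num_compatible I J m p n) = eval_poly_nm k P n (\<lambda>i. count lam i)"
      using num_compatible_eq_cycle_path_count[OF IJ(1) p] IJ(2,3) lam P(3) by simp
  qed
qed

end
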